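(* Let $\mathfrak{b}$ be the least cardinality of a subset of $\mathbb{N}^\mathbb{N}$ not contained in a $\sigma$-compact subset of $\mathbb{N}^\mathbb{N}$, and let $X=[0,\mathfrak{b})$ be the space of ordinals less than $\mathfrak{b}$ with the order topology. Then $C_c(X)$ has a $\mathfrak{G}$-base and countable $cs^\ast$-character, but $C_c(X)$ has uncountable tightness and uncountable pseudocharacter; in particular $C_c(X)$ is not submetrizable and is not a $\sigma$-space.
   Context: $C_c(X)$ is the space of continuous real-valued functions on $X$ with the compact-open topology. A $\mathfrak{G}$-base is a base $\{U_\alpha:\alpha\in\mathbb{N}^\mathbb{N}\}$ of neighborhoods of zero with $U_\beta\subseteq U_\alpha$ whenever $\alpha\le\beta$ coordinatewise. A family $\mathcal{N}$ is a $cs^\ast$-network at $x$ if for each sequence $(x_n)\to x$ and each neighborhood $O_x$ there is $N\in\mathcal{N}$ with $x\in N\subseteq O_x$ and $\{n:x_n\in N\}$ infinite; the $cs^\ast$-character is the supremum over points of the least size of such a family. Submetrizable means admitting a weaker metrizable topology. A $\sigma$-space is a regular space with a $\sigma$-locally finite network. *)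

theory Defs
  imports "HOL-Analysis.Analysis" "HOL-Library.Equipollence"
begin

definition baire_space :: "(nat \<Rightarrow> nat) topology" where
  "baire_space = product_topology (\<lambda>_::nat. discrete_topology (UNIV::nat set)) UNIV"

definition in_sigma_compact :: "(nat \<Rightarrow> nat) set \<Rightarrow> bool" where
  "in_sigma_compact B \<longleftrightarrow>
     (\<exists>\<K>. countable \<K> \<and> (\<forall>K\<in>\<K>. compactin baire_space K) \<and> B \<subseteq> \<Union>\<K>)"

text \<open>A is a witness of the cardinal b: it is not contained in a sigma-compact subset,
  and it has the least cardinality among all such subsets of N^N.\<close>
definition b_witness :: "(nat \<Rightarrow> nat) set \<Rightarrow> bool" where
  "b_witness A \<longleftrightarrow> \<not> in_sigma_compact A \<and>
     (\<forall>B. \<not> in_sigma_compact B \<longrightarrow> A \<lesssim> B)"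

definition cfun :: "'a topology \<Rightarrow> ('a \<Rightarrow> real) set" where
  "cfun X = {f. continuous_map X euclideanreal f \<and> (\<forall>x. x \<notin> topspace X \<longrightarrow> f x = 0)}"

definition compact_open :: "'a topology \<Rightarrow> ('a \<Rightarrow> real) topology" where
  "compact_open X = topology_generated_by
     (insert (cfun X) {{f \<in> cfun X. f ` K \<subseteq> U} | K U. compactin X K \<and> open U})"

definition nhd_in :: "'a topology \<Rightarrow> 'a \<Rightarrow> 'a set \<Rightarrow> bool" where
  "nhd_in T x N \<longleftrightarrow> N \<subseteq> topspace T \<and> (\<exists>V. openin T V \<and> x \<in> V \<and> V \<subseteq> N)"

definition has_G_base_at :: "'a topology \<Rightarrow> 'a \<Rightarrow> bool" where
  "has_G_base_at T z \<longleftrightarrow>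
     (\<exists>U :: (nat \<Rightarrow> nat) \<Rightarrow> 'a set.
        (\<forall>\<alpha>. nhd_in T z (U \<alpha>)) \<and>
        (\<forall>W. nhd_in T z W \<longrightarrow> (\<exists>\<alpha>. U \<alpha> \<subseteq> W)) \<and>
        (\<forall>\<alpha> \<beta>. (\<forall>n. \<alpha> n \<le> \<beta> n) \<longrightarrow> U \<beta> \<subseteq> U \<alpha>))"

definition cs_star_network_at :: "'a topology \<Rightarrow> 'a \<Rightarrow> 'a set set \<Rightarrow> bool" where
  "cs_star_network_at T x \<N> \<longleftrightarrow>
     (\<forall>s W. (\<forall>n. s n \<in> topspace T) \<and> limitin T s x sequentially \<and> nhd_in T x W \<longrightarrow>
        (\<exists>N\<in>\<N>. x \<in> N \<and> N \<subseteq> W \<and> infinite {n. s n \<in> N}))"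

definition countable_cs_star_character :: "'a topology \<Rightarrow> bool" where
  "countable_cs_star_character T \<longleftrightarrow>
     (\<forall>x\<in>topspace T. \<exists>\<N>. countable \<N> \<and> cs_star_network_at T x \<N>)"

definition countable_tightness :: "'a topology \<Rightarrow> bool" where
  "countable_tightness T \<longleftrightarrow>
     (\<forall>A x. A \<subseteq> topspace T \<and> x \<in> T closure_of A \<longrightarrow>
        (\<exists>B\<subseteq>A. countable B \<and> x \<in> T closure_of B))"

definition countable_pseudocharacter :: "'a topology \<Rightarrow> bool" where
  "countable_pseudocharacter T \<longleftrightarrow>
     (\<forall>x\<in>topspace T. \<exists>\<U>. countable \<U> \<and> (\<forall>U\<in>\<U>. openin T U \<and> x \<in> U) \<and>
        topspace T \<inter> \<Inter>\<U> = {x})"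

definition submetrizable :: "'a topology \<Rightarrow> bool" where
  "submetrizable T \<longleftrightarrow>
     (\<exists>T'. topspace T' = topspace T \<and> metrizable_space T' \<and>
           (\<forall>U. openin T' U \<longrightarrow> openin T U))"

definition network_of :: "'a topology \<Rightarrow> 'a set set \<Rightarrow> bool" where
  "network_of T \<N> \<longleftrightarrow> (\<forall>N\<in>\<N>. N \<subseteq> topspace T) \<and>
     (\<forall>U x. openin T U \<and> x \<in> U \<longrightarrow> (\<exists>N\<in>\<N>. x \<in> N \<and> N \<subseteq> U))"

definition sigma_space :: "'a topology \<Rightarrow> bool" where
  "sigma_space T \<longleftrightarrow> regular_space T \<and>
     (\<exists>\<N> :: nat \<Rightarrow> 'a set set. (\<forall>n. locally_finite_in T (\<N> n)) \<and>
        network_of T (\<Union>n. \<N> n))"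

end

theory Submission
  imports Defs
begin

text \<open>
  Let \<open>h\<close> enumerate a witness \<open>A\<close> of \<open>b\<close> along \<open>X = [0, b)\<close>. Every proper initial segment
  of \<open>X\<close> is mapped onto a set of size \<open>< b\<close>, which is \<open>\<sigma>\<close>-compact and hence dominated mod finite,
  so we can pick \<open>f x\<close> dominating \<open>h y\<close> for all \<open>y \<le> x\<close>. Sending \<open>\<alpha>\<close> to the least \<open>y\<close> with
  \<open>h y\<close> not dominated by \<open>\<alpha>\<close> then gives a monotone map \<open>\<phi>\<close> from \<open>\<nat>\<^sup>\<nat>\<close> into \<open>X\<close> with
  \<open>x < \<phi> \<alpha>\<close> whenever \<open>\<alpha>\<close> dominates \<open>f x\<close>. Hence \<open>\<phi>\<close> is cofinal, and every countable subset of \<open>X\<close>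
  is bounded, because its image under \<open>f\<close> is dominated.

  Compact subsets of \<open>X\<close> are bounded, so the sets \<open>{g. \<bar>g\<bar> < 1/(\<alpha> 0 + 1) on [0, \<phi> \<alpha>]}\<close> form a
  \<open>G\<close>-base at \<open>0\<close>. Continuous functions on \<open>X\<close> are eventually constant, so convergent sequences
  in \<open>C\<^sub>c(X)\<close> converge uniformly, and the uniform balls are a countable \<open>cs\<^sup>*\<close>-network. On the
  other hand, a countable family of neighbourhoods of \<open>0\<close> only controls a bounded initial segment
  \<open>[0, M)\<close>, so the step function \<open>indicator {M<..}\<close> lies in all of them: the pseudocharacter is
  uncountable. The same step functions accumulate at \<open>0\<close>, but countably many of them are all \<open>1\<close>
  beyond some point, so the tightness is uncountable. Submetrizable spaces and \<open>T\<^sub>1\<close> \<open>\<sigma>\<close>-spaces have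
  countable pseudocharacter.
\<close>

definition uncountable_cofinality :: "'a::linorder itself \<Rightarrow> bool" where
  "uncountable_cofinality _ \<longleftrightarrow> (\<forall>S::'a set. countable S \<longrightarrow> (\<exists>M. \<forall>x\<in>S. x < M))"

lemma uncountable_cofinality_no_max:
  "uncountable_cofinality TYPE('a::linorder) \<Longrightarrow> \<exists>w. (z::'a) < w"
  unfolding uncountable_cofinality_def by (metis countable_empty countable_insert insertI1)

lemma uncountable_cofinalityE:
  assumes "uncountable_cofinality TYPE('a::linorder)" "countable (S::'a set)"
  obtains M where "\<And>x. x \<in> S \<Longrightarrow> x < M"
  using assms unfolding uncountable_cofinality_def by blast

section \<open>Order topologies of well-orders\<close>

lemma compact_atMost_wellorder:
  fixes x :: "'a :: {wellorder, linorder_topology}"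
  shows "compact {..x}"
proof (rule compactI)
  fix C assume C: "\<forall>t\<in>C. open t" "{..x} \<subseteq> \<Union>C"
  have "p \<le> x \<longrightarrow> (\<exists>C'. C' \<subseteq> C \<and> finite C' \<and> {..p} \<subseteq> \<Union>C')" for p
  proof (induction p rule: less_induct)
    case (less p)
    show ?case
    proof
      assume px: "p \<le> x"
      then obtain U where U: "U \<in> C" "p \<in> U" using C by blast
      show "\<exists>C'. C' \<subseteq> C \<and> finite C' \<and> {..p} \<subseteq> \<Union>C'"
      proof (cases "\<exists>y. y < p")
        case False
        then have "{..p} = {p}" by (auto simp: not_less antisym)
        then show ?thesis using U by (intro exI[of _ "{U}"]) auto
      next
        case True
        then obtain y where "y < p" by blast
        then obtain b where b: "b < p" "{b<..p} \<subseteq> U"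
          using open_left[of U p y] U C by auto
        then obtain C' where C': "C' \<subseteq> C" "finite C'" "{..b} \<subseteq> \<Union>C'"
          using less.IH[of b] px by auto
        have "{..p} \<subseteq> {..b} \<union> {b<..p}" by auto
        then show ?thesis using C' b U by (intro exI[of _ "insert U C'"]) auto
      qed
    qed
  qed
  then show "\<exists>C'. C' \<subseteq> C \<and> finite C' \<and> {..x} \<subseteq> \<Union>C'" by blast
qed

lemma open_atMost_wellorder:
  fixes M :: "'a :: {wellorder, linorder_topology}"
  assumes "M < w"
  shows "open {..M}"
proof -
  define s where "s = (LEAST w. M < w)"
  have "M < s" unfolding s_def using assms by (rule LeastI)
  moreover have "x < s \<Longrightarrow> x \<le> M" for x
    unfolding s_def using not_less_Least by fastforce
  ultimately have "{..M} = {..<s}" by force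
  then show ?thesis by simp
qed

lemma continuous_on_indicator_clopen:
  assumes "open S" "closed S"
  shows "continuous_on UNIV (indicator S :: 'a::topological_space \<Rightarrow> real)"
proof -
  have "indicator S -` U = (if 1 \<in> U then S else {}) \<union> (if 0 \<in> U then - S else {})"
    for U :: "real set"
    by (auto simp: indicator_def of_bool_def split: if_splits)
  then have "open (indicator S -` U :: 'a set)" for U :: "real set"
    using assms by (auto simp: open_Compl)
  then show ?thesis by (simp add: continuous_on_open_vimage)
qed

lemma incseq_tendsto_Least_upper_bound:
  fixes p :: "nat \<Rightarrow> 'a :: {wellorder, linorder_topology}"
  assumes inc: "incseq p" and bound: "\<forall>k. p k \<le> M"
  shows "p \<longlonglongrightarrow> (LEAST z. \<forall>k. p k \<le> z)"
    (is "_ \<longlonglongrightarrow> ?l")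
proof (rule order_tendstoI)
  fix a assume "a < ?l"
  then obtain k0 where "a < p k0" using not_less_Least[of a "\<lambda>z. \<forall>k. p k \<le> z"] by (auto simp: not_le)
  then have "\<forall>k\<ge>k0. a < p k" using inc by (meson incseqD less_le_trans)
  then show "\<forall>\<^sub>F k in sequentially. a < p k" unfolding eventually_sequentially by blast
next
  fix a assume "?l < a"
  moreover have "\<forall>k. p k \<le> ?l" using bound by (rule LeastI)
  ultimately show "\<forall>\<^sub>F k in sequentially. p k < a"
    by (intro always_eventually allI) (meson le_less_trans)
qed

text \<open>Otherwise iterating jumps of size \<open>\<epsilon>\<close> gives an increasing sequence, which is bounded and
  therefore converges, contradicting continuity of \<open>u\<close> at its limit.\<close>

lemma continuous_small_oscillation_tail:
  fixes u :: "'a :: {wellorder, linorder_topology} \<Rightarrow> real"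
  assumes cof: "uncountable_cofinality TYPE('a)" and cont: "continuous_on UNIV u"
    and "\<epsilon> > 0"
  shows "\<exists>\<beta>. \<forall>y\<ge>\<beta>. dist (u y) (u \<beta>) < \<epsilon>"
proof (rule ccontr)
  assume no_tail: "\<not> ?thesis"
  have "\<forall>\<beta>. \<exists>y. \<beta> < y \<and> \<epsilon> \<le> dist (u y) (u \<beta>)"
  proof
    fix \<beta>
    obtain y where y: "\<beta> \<le> y" "\<not> dist (u y) (u \<beta>) < \<epsilon>" using no_tail by blast
    then have "y \<noteq> \<beta>" using \<open>\<epsilon> > 0\<close> by auto
    then have "\<beta> < y" using y(1) le_neq_trans by blast
    moreover have "\<epsilon> \<le> dist (u y) (u \<beta>)" using y(2) by (rule leI)
    ultimately show "\<exists>y. \<beta> < y \<and> \<epsilon> \<le> dist (u y) (u \<beta>)" by blast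
  qed
  from choice[OF this] obtain next_jump
    where "\<forall>\<beta>. \<beta> < next_jump \<beta> \<and> \<epsilon> \<le> dist (u (next_jump \<beta>)) (u \<beta>)" ..
  then have jump: "\<beta> < next_jump \<beta>" "\<epsilon> \<le> dist (u (next_jump \<beta>)) (u \<beta>)" for \<beta>
    by simp_all
  define p where "p k = (next_jump ^^ k) undefined" for k
  have p_Suc: "p (Suc k) = next_jump (p k)" for k unfolding p_def by simp
  have inc: "incseq p" by (rule incseq_SucI) (simp add: p_Suc jump(1) less_imp_le)
  have "countable (range p)" by simp
  then obtain M where M: "\<And>x. x \<in> range p \<Longrightarrow> x < M"
    by (rule uncountable_cofinalityE[OF cof]) blast
  have "p \<longlonglongrightarrow> (LEAST z. \<forall>k. p k \<le> z)" (is "_ \<longlonglongrightarrow> ?l")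
    by (rule incseq_tendsto_Least_upper_bound[OF inc, of M]) (simp add: M less_imp_le)
  moreover have "isCont u ?l" using cont by (simp add: continuous_on_eq_continuous_at)
  ultimately have lim: "(\<lambda>k. u (p k)) \<longlonglongrightarrow> u ?l" by (rule isCont_tendsto_compose[rotated])
  then have "(\<lambda>k. u (p (Suc k))) \<longlonglongrightarrow> u ?l" by (rule LIMSEQ_Suc)
  with lim obtain k where "dist (u (p (Suc k))) (u ?l) < \<epsilon> / 2" "dist (u (p k)) (u ?l) < \<epsilon> / 2"
    using \<open>\<epsilon> > 0\<close> unfolding LIMSEQ_def
    by (metis half_gt_zero le_add1 add.commute)
  then have "dist (u (p (Suc k))) (u (p k)) < \<epsilon>" by (rule dist_triangle_half_l)
  then show False using jump(2)[of "p k"] p_Suc[of k] by simp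
qed

lemma continuous_eventually_constant:
  fixes u :: "'a :: {wellorder, linorder_topology} \<Rightarrow> real"
  assumes cof: "uncountable_cofinality TYPE('a)" and cont: "continuous_on UNIV u"
  shows "\<exists>\<xi>. \<forall>y\<ge>\<xi>. u y = u \<xi>"
proof -
  have "\<exists>\<beta>. \<forall>y\<ge>\<beta>. dist (u y) (u \<beta>) < inverse (real (Suc n)) / 2" for n
    by (rule continuous_small_oscillation_tail[OF cof cont]) simp
  from choice[OF allI[OF this]] obtain \<beta>
    where \<beta>: "\<forall>n. \<forall>y\<ge>\<beta> n. dist (u y) (u (\<beta> n)) < inverse (real (Suc n)) / 2" ..
  have "countable (range \<beta>)" by simp
  then obtain \<xi> where \<xi>: "\<And>x. x \<in> range \<beta> \<Longrightarrow> x < \<xi>"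
    by (rule uncountable_cofinalityE[OF cof]) blast
  have "u y = u \<xi>" if "\<xi> \<le> y" for y
  proof (rule ccontr)
    assume "u y \<noteq> u \<xi>"
    then obtain n where n: "inverse (real (Suc n)) < dist (u y) (u \<xi>)"
      using reals_Archimedean zero_less_dist_iff by blast
    have "\<beta> n < \<xi>" using \<xi> by simp
    then have "\<beta> n \<le> \<xi>" "\<beta> n \<le> y" using \<open>\<xi> \<le> y\<close> by simp_all
    then have "dist (u y) (u (\<beta> n)) < inverse (real (Suc n)) / 2"
      "dist (u \<xi>) (u (\<beta> n)) < inverse (real (Suc n)) / 2"
      using \<beta> by simp_all
    then have "dist (u y) (u \<xi>) < inverse (real (Suc n))" by (rule dist_triangle_half_l)
    with n show False by simp
  qed
  then show ?thesis by blast
qed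

section \<open>The bounding number\<close>

definition le_star :: "(nat \<Rightarrow> nat) \<Rightarrow> (nat \<Rightarrow> nat) \<Rightarrow> bool" where
  "le_star a b \<longleftrightarrow> (\<forall>\<^sub>F n in sequentially. a n \<le> b n)"

lemma le_star_refl: "le_star a a"
  unfolding le_star_def by simp

lemma le_star_trans: "le_star a b \<Longrightarrow> le_star b c \<Longrightarrow> le_star a c"
  unfolding le_star_def by (erule (1) eventually_elim2) (rule le_trans)

lemma le_star_mono: "le_star a b \<Longrightarrow> b \<le> c \<Longrightarrow> le_star a c"
  unfolding le_star_def le_fun_def by (elim eventually_mono) (meson le_trans)

lemma compactin_baire_space_bounded:
  assumes "compactin baire_space K"
  shows "\<exists>c. \<forall>s\<in>K. \<forall>n. s n \<le> c n"
proof -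
  have "finite ((\<lambda>s. s n) ` K)" for n
  proof -
    have "continuous_map baire_space (discrete_topology (UNIV::nat set)) (\<lambda>s. s n)"
      unfolding baire_space_def by (rule continuous_map_product_projection) simp
    then have "compactin (discrete_topology (UNIV::nat set)) ((\<lambda>s. s n) ` K)"
      using image_compactin assms by blast
    then show ?thesis by (simp add: compactin_discrete_topology)
  qed
  then show ?thesis by (intro exI[of _ "\<lambda>n. Max ((\<lambda>s. s n) ` K)"]) auto
qed

text \<open>The diagonal bound \<open>g n = \<Sum>k\<le>n. c\<^sub>k n\<close> dominates every coordinatewise bound \<open>c\<^sub>k\<close>
  from the \<open>k\<close>-th position on.\<close>

lemma in_sigma_compact_imp_dominated:
  assumes "in_sigma_compact B"
  shows "\<exists>g. \<forall>s\<in>B. le_star s g"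
proof -
  obtain \<K> where K: "countable \<K>" "\<forall>K\<in>\<K>. compactin baire_space K" "B \<subseteq> \<Union>\<K>"
    using assms unfolding in_sigma_compact_def by blast
  show ?thesis
  proof (cases "\<K> = {}")
    case True then show ?thesis using K by auto
  next
    case False
    then have rK: "range (from_nat_into \<K>) = \<K>" using K(1) by (simp add: range_from_nat_into)
    then have "\<forall>k. \<exists>c. \<forall>s\<in>from_nat_into \<K> k. \<forall>n. s n \<le> c n"
      using compactin_baire_space_bounded K(2) by blast
    then obtain c where c: "\<And>k s n. s \<in> from_nat_into \<K> k \<Longrightarrow> s n \<le> c k n" by metis
    define g where "g n = (\<Sum>k\<le>n. c k n)" for n
    have "le_star s g" if "s \<in> B" for s
    proof -
      obtain k where k: "s \<in> from_nat_into \<K> k" using \<open>s \<in> B\<close> K(3) rK by blast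
      have "s n \<le> g n" if "n \<ge> k" for n
        using c[OF k, of n] member_le_sum[of k "{..n}" "\<lambda>k. c k n"] that
        unfolding g_def by simp
      then show ?thesis unfolding le_star_def eventually_sequentially by blast
    qed
    then show ?thesis by blast
  qed
qed

lemma dominated_in_sigma_compact: "in_sigma_compact {s. le_star s g}"
proof -
  define Q where "Q k = {s. \<forall>n. s n \<le> max (g n) k}" for k :: nat
  have "compactin baire_space (Q k)" for k
  proof -
    have "Q k = PiE UNIV (\<lambda>n. {..max (g n) k})"
      unfolding Q_def PiE_def Pi_def by auto
    moreover have "compactin baire_space (PiE UNIV (\<lambda>n. {..max (g n) k}))"
      unfolding baire_space_def compactin_PiE by (auto simp: compactin_discrete_topology)
    ultimately show ?thesis by simp
  qed
  moreover have "{s. le_star s g} \<subseteq> \<Union>(range Q)"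
  proof
    fix s assume "s \<in> {s. le_star s g}"
    then obtain N where N: "\<forall>n\<ge>N. s n \<le> g n"
      unfolding le_star_def eventually_sequentially by auto
    have "s n \<le> max (g n) (\<Sum>n<N. s n)" for n
      using N member_le_sum[of n "{..<N}" s] by (cases "n < N") (auto simp: not_less le_max_iff_disj)
    then show "s \<in> \<Union>(range Q)" unfolding Q_def by auto
  qed
  ultimately show ?thesis unfolding in_sigma_compact_def
    by (intro exI[of _ "range Q"]) auto
qed

lemma countable_imp_in_sigma_compact:
  assumes "countable B"
  shows "in_sigma_compact B"
proof -
  have "compactin baire_space {s}" for s
    unfolding baire_space_def by (simp add: compactin_sing)
  then show ?thesis unfolding in_sigma_compact_def
    using assms by (intro exI[of _ "(\<lambda>s. {s}) ` B"]) auto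
qed

lemma b_witness_undominated:
  assumes "b_witness A"
  shows "\<exists>a\<in>A. \<not> le_star a g"
proof (rule ccontr)
  assume "\<not> ?thesis"
  then have "A \<subseteq> {s. le_star s g}" by auto
  then have "in_sigma_compact A"
    using dominated_in_sigma_compact[of g] unfolding in_sigma_compact_def by (meson order_trans)
  then show False using assms unfolding b_witness_def by blast
qed

lemma b_witness_initial_segment_in_sigma_compact:
  fixes h :: "'a::linorder \<Rightarrow> nat \<Rightarrow> nat"
  assumes bA: "b_witness A" and h: "bij_betw h UNIV A" and initial: "\<forall>x::'a. {..<x} \<prec> A"
  shows "in_sigma_compact (h ` {..<x})"
proof (rule ccontr)
  assume "\<not> ?thesis"
  then have "A \<lesssim> h ` {..<x}" using bA unfolding b_witness_def by blast
  moreover have "h ` {..<x} \<approx> {..<x}"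
  proof (rule inj_on_image_eqpoll_self)
    show "inj_on h {..<x}" using h unfolding bij_betw_def by (auto intro: inj_on_subset)
  qed
  ultimately have "A \<lesssim> {..<x}" by (meson eqpoll_imp_lepoll lepoll_trans)
  then show False
    using initial[rule_format, of x] lepoll_antisym unfolding lesspoll_def by blast
qed

lemma b_witness_monotone_map:
  fixes A :: "(nat \<Rightarrow> nat) set"
  assumes bA: "b_witness A"
    and card_X: "(UNIV :: 'a :: wellorder set) \<approx> A"
    and initial: "\<forall>x :: 'a. {..<x} \<prec> A"
  obtains \<phi> f where "mono \<phi>" "\<And>x :: 'a. \<And>\<alpha>. le_star (f x) \<alpha> \<Longrightarrow> x < \<phi> \<alpha>"
proof -
  obtain h where h: "bij_betw h (UNIV::'a set) A" using card_X unfolding eqpoll_def by blast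
  have "\<exists>g. \<forall>y<x. le_star (h y) g" for x
  proof -
    obtain g where "\<forall>s\<in>h ` {..<x}. le_star s g"
      using in_sigma_compact_imp_dominated b_witness_initial_segment_in_sigma_compact[OF bA h initial]
      by blast
    then show ?thesis by auto
  qed
  from choice[OF allI[OF this]] obtain bound where bound: "\<forall>x. \<forall>y<x. le_star (h y) (bound x)" ..
  define f where "f x = (\<lambda>n. max (bound x n) (h x n))" for x
  have f_dominates: "le_star (h y) (f x)" if "y \<le> x" for x y
  proof (cases "y = x")
    case True
    have "h x \<le> f x" unfolding f_def le_fun_def by simp
    then show ?thesis using le_star_mono[OF le_star_refl] True by blast
  next
    case False
    with that have "le_star (h y) (bound x)" using bound by simp
    moreover have "bound x \<le> f x" unfolding f_def le_fun_def by simp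
    ultimately show ?thesis by (rule le_star_mono)
  qed
  define \<phi> where "\<phi> \<alpha> = (LEAST y. \<not> le_star (h y) \<alpha>)" for \<alpha>
  have escapes: "\<not> le_star (h (\<phi> \<alpha>)) \<alpha>" for \<alpha>
  proof -
    obtain a where "a \<in> A" "\<not> le_star a \<alpha>" using b_witness_undominated[OF bA] by blast
    moreover have "A = range h" using h by (simp add: bij_betw_def)
    ultimately obtain y where "\<not> le_star (h y) \<alpha>" by blast
    then show ?thesis unfolding \<phi>_def by (rule LeastI)
  qed
  have "mono \<phi>"
  proof
    fix \<alpha> \<beta> :: "nat \<Rightarrow> nat" assume "\<alpha> \<le> \<beta>"
    then have "\<not> le_star (h (\<phi> \<beta>)) \<alpha>" using escapes le_star_mono by blast
    then show "\<phi> \<alpha> \<le> \<phi> \<beta>" unfolding \<phi>_def by (rule Least_le)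
  qed
  moreover have "x < \<phi> \<alpha>" if "le_star (f x) \<alpha>" for x \<alpha>
  proof (rule ccontr)
    assume "\<not> x < \<phi> \<alpha>"
    then have "le_star (h (\<phi> \<alpha>)) (f x)" by (intro f_dominates) simp
    then show False using escapes le_star_trans[OF _ that] by blast
  qed
  ultimately show thesis by (rule that)
qed

lemma b_ordinal_uncountable_cofinality:
  fixes A :: "(nat \<Rightarrow> nat) set"
  assumes "b_witness A" "(UNIV :: 'a :: wellorder set) \<approx> A" "\<forall>x :: 'a. {..<x} \<prec> A"
  shows "uncountable_cofinality TYPE('a)"
  unfolding uncountable_cofinality_def
proof (intro allI impI)
  fix S :: "'a set" assume "countable S"
  obtain \<phi> and f :: "'a \<Rightarrow> nat \<Rightarrow> nat"
    where "mono \<phi>" and f\<phi>: "\<And>x \<alpha>. le_star (f x) \<alpha> \<Longrightarrow> x < \<phi> \<alpha>"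
    by (rule b_witness_monotone_map[OF assms]) blast
  have "in_sigma_compact (f ` S)" using \<open>countable S\<close> by (intro countable_imp_in_sigma_compact) simp
  then obtain g where "\<forall>s\<in>f ` S. le_star s g" using in_sigma_compact_imp_dominated by blast
  then show "\<exists>M. \<forall>x\<in>S. x < M" using f\<phi> by blast
qed

lemma b_ordinal_monotone_cofinal_map:
  fixes A :: "(nat \<Rightarrow> nat) set"
  assumes "b_witness A" "(UNIV :: 'a set) \<approx> A" "\<forall>x :: 'a. {..<x} \<prec> A"
  obtains \<phi> :: "(nat \<Rightarrow> nat) \<Rightarrow> 'a::wellorder" where "mono \<phi>" "\<And>z. \<exists>\<alpha>. z < \<phi> \<alpha>"
proof -
  obtain \<phi> and f :: "'a \<Rightarrow> nat \<Rightarrow> nat"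
    where "mono \<phi>" and f\<phi>: "\<And>x \<alpha>. le_star (f x) \<alpha> \<Longrightarrow> x < \<phi> \<alpha>"
    by (rule b_witness_monotone_map[OF assms]) blast
  have "\<exists>\<alpha>. z < \<phi> \<alpha>" for z using f\<phi>[OF le_star_refl] by blast
  with \<open>mono \<phi>\<close> show thesis by (rule that)
qed

section \<open>The compact-open topology\<close>

abbreviation CF :: "('a::topological_space \<Rightarrow> real) set" where
  "CF \<equiv> cfun (euclidean :: 'a topology)"

abbreviation CO :: "('a::topological_space \<Rightarrow> real) topology" where
  "CO \<equiv> compact_open (euclidean :: 'a topology)"

lemma cfun_euclidean: "CF = {f. continuous_on UNIV f}"
  unfolding cfun_def by simp

definition CO_subbasis :: "('a::topological_space \<Rightarrow> real) set set" where
  "CO_subbasis = insert CF {{f \<in> CF. f ` K \<subseteq> U} | K U. compact K \<and> open U}"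

lemma CO_eq: "CO = topology_generated_by CO_subbasis"
  unfolding compact_open_def CO_subbasis_def by simp

lemma topspace_CO: "topspace CO = CF"
  unfolding CO_eq CO_subbasis_def by auto

lemma zero_in_CF: "(\<lambda>x. 0::real) \<in> CF"
  unfolding cfun_euclidean by simp

lemma openin_imp_nhd_in: "openin T V \<Longrightarrow> x \<in> V \<Longrightarrow> nhd_in T x V"
  unfolding nhd_in_def using openin_subset by blast

definition uniform_nhd :: "('a::topological_space \<Rightarrow> real) \<Rightarrow> 'a set \<Rightarrow> real \<Rightarrow> ('a \<Rightarrow> real) set" where
  "uniform_nhd f K e = {g \<in> CF. \<forall>x\<in>K. \<bar>g x - f x\<bar> < e}"

lemma uniform_nhd_antimono: "K \<subseteq> K' \<Longrightarrow> e \<le> e' \<Longrightarrow> uniform_nhd f K' e \<subseteq> uniform_nhd f K e'"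
  unfolding uniform_nhd_def by force

lemma subbasic_contains_uniform_nhd:
  assumes K: "compact K" and U: "open U" and f: "f \<in> CF" "f ` K \<subseteq> U"
  shows "\<exists>e>0. uniform_nhd f K e \<subseteq> {g \<in> CF. g ` K \<subseteq> U}"
proof -
  have "compact (f ` K)"
    using K f by (intro compact_continuous_image) (auto simp: cfun_euclidean intro: continuous_on_subset)
  then obtain e where e: "e > 0" "(\<Union>x\<in>f ` K. ball x e) \<subseteq> U"
    by (rule compact_subset_open_imp_ball_epsilon_subset[OF _ U f(2)])
  have "g ` K \<subseteq> U" if "g \<in> uniform_nhd f K e" for g
  proof -
    have "g x \<in> ball (f x) e" if "x \<in> K" for x
      using \<open>g \<in> uniform_nhd f K e\<close> that
      unfolding uniform_nhd_def by (auto simp: dist_real_def abs_minus_commute)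
    then show ?thesis using e by blast
  qed
  then show ?thesis using e unfolding uniform_nhd_def by blast
qed

lemma openin_CO_imp_uniform_nhd:
  assumes "openin CO V" "f \<in> V"
  shows "\<exists>K e. compact K \<and> e > 0 \<and> uniform_nhd f K e \<subseteq> V"
proof -
  have "generate_topology_on CO_subbasis V"
    using assms(1) unfolding CO_eq by (rule openin_topology_generated_by)
  then show ?thesis using assms(2)
  proof (induction arbitrary: f)
    case Empty then show ?case by simp
  next
    case (Int a b)
    obtain K1 e1 where 1: "compact K1" "e1 > 0" "uniform_nhd f K1 e1 \<subseteq> a"
      using Int.IH(1)[of f] Int.prems by blast
    obtain K2 e2 where 2: "compact K2" "e2 > 0" "uniform_nhd f K2 e2 \<subseteq> b"
      using Int.IH(2)[of f] Int.prems by blast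
    have "uniform_nhd f (K1 \<union> K2) (min e1 e2) \<subseteq> uniform_nhd f K1 e1"
      "uniform_nhd f (K1 \<union> K2) (min e1 e2) \<subseteq> uniform_nhd f K2 e2"
      by (intro uniform_nhd_antimono; simp)+
    then have "uniform_nhd f (K1 \<union> K2) (min e1 e2) \<subseteq> a \<inter> b" using 1(3) 2(3) by blast
    moreover have "compact (K1 \<union> K2)" "min e1 e2 > 0" using 1 2 by (auto simp: compact_Un)
    ultimately show ?case by blast
  next
    case (UN K)
    then obtain k where "k \<in> K" "f \<in> k" by blast
    then show ?case using UN.IH[of k f] by blast
  next
    case (Basis s)
    show ?case
    proof (cases "s = CF")
      case True
      then show ?thesis unfolding uniform_nhd_def by (intro exI[of _ "{}"] exI[of _ 1]) auto
    next
      case False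
      then obtain K U where s: "s = {g \<in> CF. g ` K \<subseteq> U}" and KU: "compact K" "open U"
        using Basis.hyps unfolding CO_subbasis_def by auto
      have "f \<in> CF" "f ` K \<subseteq> U" using Basis.prems s by auto
      then obtain e where "e > 0" "uniform_nhd f K e \<subseteq> s"
        using subbasic_contains_uniform_nhd[OF KU] s by blast
      then show ?thesis using KU(1) by blast
    qed
  qed
qed

text \<open>Cover \<open>K\<close> by finitely many pieces \<open>K \<inter> f\<^sup>-\<^sup>1(cball (f z) (e/3))\<close> and control \<open>g\<close> on each
  piece by a subbasic set.\<close>

lemma uniform_nhd_contains_openin:
  assumes K: "compact K" and f: "f \<in> CF" and e: "e > 0"
  shows "\<exists>V. openin CO V \<and> f \<in> V \<and> V \<subseteq> uniform_nhd f K e"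
proof -
  have fc: "continuous_on UNIV f" using f cfun_euclidean by auto
  define Oz where "Oz z = f -` ball (f z) (e/3)" for z
  have "open (Oz z)" for z unfolding Oz_def using fc by (simp add: continuous_on_open_vimage)
  moreover have "K \<subseteq> (\<Union>z\<in>K. Oz z)" unfolding Oz_def using e by auto
  ultimately obtain D where D: "D \<subseteq> K" "finite D" "K \<subseteq> (\<Union>z\<in>D. Oz z)"
    using compactE_image[OF K] by metis
  define Kz where "Kz z = K \<inter> f -` cball (f z) (e/3)" for z
  have cKz: "compact (Kz z)" for z
    unfolding Kz_def using K continuous_on_closed_vimage[of UNIV f] fc by auto
  define W where "W z = {g \<in> CF. g ` Kz z \<subseteq> ball (f z) (2*e/3)}" for z
  define V where "V = \<Inter>(insert CF (W ` D))"
  have "generate_topology_on CO_subbasis V" unfolding V_def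
  proof (rule generate_topology_on_Inter)
    fix S assume "S \<in> insert CF (W ` D)"
    then show "generate_topology_on CO_subbasis S"
      unfolding W_def using cKz by (auto intro!: generate_topology_on.Basis simp: CO_subbasis_def)
  qed (use D in simp_all)
  then have "openin CO V" unfolding CO_eq by (simp add: openin_topology_generated_by_iff)
  moreover have "f \<in> V"
    unfolding V_def W_def Kz_def using f e by (auto simp: dist_real_def)
  moreover have "V \<subseteq> uniform_nhd f K e"
  proof
    fix g assume g: "g \<in> V"
    have "\<bar>g x - f x\<bar> < e" if "x \<in> K" for x
    proof -
      obtain z where z: "z \<in> D" "x \<in> Oz z" using D \<open>x \<in> K\<close> by auto
      then have "x \<in> Kz z" "\<bar>f x - f z\<bar> < e/3"
        unfolding Kz_def Oz_def using \<open>x \<in> K\<close> by (auto simp: dist_real_def abs_minus_commute)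
      moreover have "g \<in> W z" using g z unfolding V_def by auto
      ultimately have "\<bar>g x - f z\<bar> < 2*e/3"
        unfolding W_def by (auto simp: dist_real_def abs_minus_commute)
      with \<open>\<bar>f x - f z\<bar> < e/3\<close> show ?thesis by linarith
    qed
    then show "g \<in> uniform_nhd f K e" using g unfolding uniform_nhd_def V_def by auto
  qed
  ultimately show ?thesis by blast
qed

lemma openin_uniform_nhd:
  assumes K: "compact K" and f: "f \<in> CF"
  shows "openin CO (uniform_nhd f K e)"
proof (subst openin_subopen, intro ballI)
  fix g assume g: "g \<in> uniform_nhd f K e"
  have "\<exists>d<e. \<forall>x\<in>K. \<bar>g x - f x\<bar> \<le> d"
  proof (cases "K = {}")
    case True then show ?thesis by (intro exI[of _ "e - 1"]) auto
  next
    case False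
    have "continuous_on K (\<lambda>x. \<bar>g x - f x\<bar>)"
      using f g unfolding uniform_nhd_def cfun_euclidean
      by (intro continuous_intros) (auto intro: continuous_on_subset)
    then obtain x0 where "x0 \<in> K" "\<forall>x\<in>K. \<bar>g x - f x\<bar> \<le> \<bar>g x0 - f x0\<bar>"
      using continuous_attains_sup[OF K False] by blast
    then show ?thesis using g unfolding uniform_nhd_def by blast
  qed
  then obtain d where d: "d < e" "\<forall>x\<in>K. \<bar>g x - f x\<bar> \<le> d" by blast
  obtain V where V: "openin CO V" "g \<in> V" "V \<subseteq> uniform_nhd g K (e - d)"
    using uniform_nhd_contains_openin[OF K, of g "e - d"] g d(1) unfolding uniform_nhd_def by auto
  have "uniform_nhd g K (e - d) \<subseteq> uniform_nhd f K e"
    using d(2) unfolding uniform_nhd_def by force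
  then show "\<exists>T. openin CO T \<and> g \<in> T \<and> T \<subseteq> uniform_nhd f K e" using V by blast
qed

lemma t1_space_CO: "t1_space (CO :: ('a::topological_space \<Rightarrow> real) topology)"
  unfolding t1_space_def topspace_CO
proof (intro ballI impI)
  fix g f :: "'a \<Rightarrow> real" assume "g \<in> CF" "g \<noteq> f"
  then obtain x where "g x \<noteq> f x" by auto
  then have "g \<in> uniform_nhd g {x} \<bar>g x - f x\<bar>" "f \<notin> uniform_nhd g {x} \<bar>g x - f x\<bar>"
    using \<open>g \<in> CF\<close> unfolding uniform_nhd_def by auto
  then show "\<exists>U. openin CO U \<and> g \<in> U \<and> f \<notin> U" using openin_uniform_nhd[OF compact_sing \<open>g \<in> CF\<close>] by blast
qed

section \<open>Pseudocharacter, submetrizability and \<open>\<sigma>\<close>-spaces\<close>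

lemma submetrizable_imp_countable_pseudocharacter:
  assumes "submetrizable T"
  shows "countable_pseudocharacter T"
  unfolding countable_pseudocharacter_def
proof
  fix z assume z: "z \<in> topspace T"
  obtain T' where T': "topspace T' = topspace T" "metrizable_space T'"
    "\<And>U. openin T' U \<Longrightarrow> openin T U"
    using assms unfolding submetrizable_def by blast
  obtain \<B> where B: "countable \<B>" "\<forall>V\<in>\<B>. openin T' V"
     "\<forall>U. openin T' U \<and> z \<in> U \<longrightarrow> (\<exists>V\<in>\<B>. z \<in> V \<and> V \<subseteq> U)"
    using metrizable_imp_first_countable[OF T'(2)] z T'(1) unfolding first_countable_def by metis
  define \<U> where "\<U> = {V\<in>\<B>. z \<in> V}"
  have "topspace T \<inter> \<Inter>\<U> \<subseteq> {z}"
  proof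
    fix g assume g: "g \<in> topspace T \<inter> \<Inter>\<U>"
    show "g \<in> {z}"
    proof (rule ccontr)
      assume "g \<notin> {z}"
      then obtain U V where "openin T' U" "openin T' V" "z \<in> U" "g \<in> V" "disjnt U V"
        using metrizable_imp_Hausdorff_space[OF T'(2)] g z T'(1)
        unfolding Hausdorff_space_def by (metis IntE singletonI)
      then show False using B(3) g unfolding \<U>_def disjnt_def by blast
    qed
  qed
  then show "\<exists>\<U>. countable \<U> \<and> (\<forall>U\<in>\<U>. openin T U \<and> z \<in> U) \<and> topspace T \<inter> \<Inter>\<U> = {z}"
    using B(1,2) T'(3) z by (intro exI[of _ \<U>]) (auto simp: \<U>_def)
qed

text \<open>\<open>C n\<close> is the union of the closures of those members of the \<open>n\<close>-th family whose closure misses \<open>z\<close>;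
  it is closed by local finiteness, and by regularity every point other than \<open>z\<close> lies in some \<open>C n\<close>.\<close>

lemma sigma_space_imp_countable_pseudocharacter:
  assumes sigma: "sigma_space T" and T1: "t1_space T"
  shows "countable_pseudocharacter T"
  unfolding countable_pseudocharacter_def
proof
  fix z assume z: "z \<in> topspace T"
  obtain \<N> :: "nat \<Rightarrow> 'a set set" where N: "regular_space T"
    "\<And>n. locally_finite_in T (\<N> n)" "network_of T (\<Union>n. \<N> n)"
    using sigma unfolding sigma_space_def by blast
  define C where "C n = \<Union>((\<lambda>N. T closure_of N) ` {N \<in> \<N> n. z \<notin> T closure_of N})" for n
  define \<U> where "\<U> = range (\<lambda>n. topspace T - C n)"
  have "closedin T (C n)" for n
    unfolding C_def
    by (rule closedin_Union_locally_finite_closure, rule locally_finite_in_subset[OF N(2)]) auto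
  then have opens: "\<forall>U\<in>\<U>. openin T U \<and> z \<in> U"
    using z unfolding \<U>_def C_def by auto
  have "\<exists>n. g \<in> C n" if g: "g \<in> topspace T - {z}" for g
  proof -
    have "closedin T {z}" using T1 z by (simp add: t1_space_closedin_singleton)
    then obtain U V where UV: "openin T U" "openin T V" "g \<in> U" "{z} \<subseteq> V" "disjnt U V"
      using N(1)[unfolded regular_space_def, rule_format, of "{z}" g] g by blast
    obtain n Nn where Nn: "Nn \<in> \<N> n" "g \<in> Nn" "Nn \<subseteq> U"
      using N(3)[unfolded network_of_def, THEN conjunct2, rule_format, of U g] UV(1,3) by blast
    have "Nn \<subseteq> topspace T - V" using Nn(3) openin_subset[OF UV(1)] UV(5) by (auto simp: disjnt_def)
    then have "T closure_of Nn \<subseteq> topspace T - V"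
      by (rule closure_of_minimal) (use UV(2) in auto)
    then have "z \<notin> T closure_of Nn" using UV(4) by blast
    moreover have "g \<in> T closure_of Nn"
      using closure_of_subset[of Nn T] Nn(2,3) openin_subset[OF UV(1)] by blast
    ultimately show ?thesis unfolding C_def using Nn(1) by blast
  qed
  then have "topspace T \<inter> \<Inter>\<U> \<subseteq> {z}" unfolding \<U>_def by blast
  with opens z show "\<exists>\<U>. countable \<U> \<and> (\<forall>U\<in>\<U>. openin T U \<and> z \<in> U) \<and> topspace T \<inter> \<Inter>\<U> = {z}"
    by (intro exI[of _ \<U>]) (auto simp: \<U>_def)
qed

section \<open>Functions on an ordinal of uncountable cofinality\<close>

lemma openin_CO_imp_uniform_nhd_initial_segment:
  fixes f :: "'a::{wellorder,linorder_topology} \<Rightarrow> real"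
  assumes no_max: "\<And>z::'a. \<exists>w. z < w" and "openin CO V" "f \<in> V"
  shows "\<exists>m e. e > 0 \<and> uniform_nhd f {..<m} e \<subseteq> V"
proof -
  obtain K e where Ke: "compact K" "e > 0" "uniform_nhd f K e \<subseteq> V"
    using openin_CO_imp_uniform_nhd[OF assms(2,3)] by blast
  have "\<exists>m. K \<subseteq> {..<m}"
  proof (cases "K = {}")
    case False
    then obtain s where "s \<in> K" "\<forall>t\<in>K. t \<le> s" using compact_attains_sup[OF Ke(1)] by blast
    moreover obtain w where "s < w" using no_max by blast
    ultimately have "K \<subseteq> {..<w}" by (auto intro: le_less_trans)
    then show ?thesis ..
  qed simp
  then obtain m where "K \<subseteq> {..<m}" ..
  then have "uniform_nhd f {..<m} e \<subseteq> V" using uniform_nhd_antimono[of K "{..<m}" e e f] Ke(3) by blast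
  then show ?thesis using Ke(2) by blast
qed

lemma indicator_greaterThan_in_CF:
  fixes M :: "'a::{wellorder,linorder_topology}"
  assumes "\<exists>w. M < w"
  shows "indicator {M<..} \<in> (CF :: ('a \<Rightarrow> real) set)"
proof -
  have "closed {M<..}"
    unfolding closed_def Compl_greaterThan using assms open_atMost_wellorder by blast
  then show ?thesis
    unfolding cfun_euclidean by (simp add: continuous_on_indicator_clopen)
qed

lemma not_countable_pseudocharacter_CO:
  assumes cof: "uncountable_cofinality TYPE('a::{wellorder,linorder_topology})"
  shows "\<not> countable_pseudocharacter (CO :: ('a \<Rightarrow> real) topology)"
proof
  note no_max = uncountable_cofinality_no_max[OF cof]
  assume "countable_pseudocharacter (CO :: ('a \<Rightarrow> real) topology)"
  from bspec[OF this[unfolded countable_pseudocharacter_def topspace_CO] zero_in_CF]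
  obtain \<U> where U: "countable \<U>" "\<forall>U\<in>\<U>. openin CO U \<and> (\<lambda>x::'a. 0::real) \<in> U"
    "CF \<inter> \<Inter>\<U> = {(\<lambda>x::'a. 0::real)}"
    by (elim exE conjE)
  have "\<forall>U\<in>\<U>. \<exists>m e. e > 0 \<and> uniform_nhd (\<lambda>x. 0) {..<m} e \<subseteq> U"
    using openin_CO_imp_uniform_nhd_initial_segment[OF no_max] U(2) by blast
  then obtain m e where me: "\<forall>U\<in>\<U>. e U > 0 \<and> uniform_nhd (\<lambda>x. 0) {..<m U} (e U) \<subseteq> U"
    by metis
  have "countable (m ` \<U>)" using U(1) by simp
  then obtain M where M: "\<And>x. x \<in> m ` \<U> \<Longrightarrow> x < M"
    by (rule uncountable_cofinalityE[OF cof]) blast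
  obtain w where "M < w" using no_max by blast
  note step_CF = indicator_greaterThan_in_CF[OF no_max]
  have "indicator {M<..} \<in> uniform_nhd (\<lambda>x. 0) {..<m U} (e U)" if "U \<in> \<U>" for U
  proof -
    have "m U < M" using M that by blast
    then have "indicator {M<..} x = (0::real)" if "x < m U" for x using that by auto
    then show ?thesis using step_CF me that unfolding uniform_nhd_def by auto
  qed
  then have "indicator {M<..} \<in> CF \<inter> \<Inter>\<U>" using step_CF me by blast
  then have "indicator {M<..} = (\<lambda>x::'a. 0::real)" using U(3) by blast
  then have "indicator {M<..} w = (0::real)" by simp
  with \<open>M < w\<close> show False by simp
qed

lemma not_countable_tightness_CO:
  assumes cof: "uncountable_cofinality TYPE('a::{wellorder,linorder_topology})"
  shows "\<not> countable_tightness (CO :: ('a \<Rightarrow> real) topology)"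
proof
  note no_max = uncountable_cofinality_no_max[OF cof]
  note step_CF = indicator_greaterThan_in_CF[OF no_max]
  assume tight: "countable_tightness (CO :: ('a \<Rightarrow> real) topology)"
  define S where "S = range (\<lambda>M::'a. indicator {M<..} :: 'a \<Rightarrow> real)"
  have "(\<lambda>x. 0) \<in> CO closure_of S"
    unfolding in_closure_of topspace_CO
  proof (intro conjI allI impI zero_in_CF)
    fix T assume "(\<lambda>x::'a. 0::real) \<in> T \<and> openin CO T"
    then obtain m e where "e > 0" "uniform_nhd (\<lambda>x. 0) {..<m} e \<subseteq> T"
      using openin_CO_imp_uniform_nhd_initial_segment[OF no_max] by blast
    moreover have "indicator {m<..} \<in> uniform_nhd (\<lambda>x. 0) {..<m} e"
      using step_CF \<open>e > 0\<close> unfolding uniform_nhd_def by auto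
    ultimately show "\<exists>y. y \<in> S \<and> y \<in> T" unfolding S_def by blast
  qed
  moreover have "S \<subseteq> topspace CO" unfolding S_def topspace_CO using step_CF by blast
  ultimately obtain B where B: "B \<subseteq> S" "countable B" "(\<lambda>x. 0) \<in> CO closure_of B"
    using tight[unfolded countable_tightness_def, rule_format, of S "\<lambda>x. 0"] by blast
  have "\<forall>b\<in>B. \<exists>M. b = indicator {M<..}" using B(1) unfolding S_def by blast
  from bchoice[OF this] obtain steps where steps: "\<forall>b\<in>B. b = indicator {steps b<..}" ..
  have "countable (steps ` B)" using B(2) by simp
  then obtain M where M: "\<And>x. x \<in> steps ` B \<Longrightarrow> x < M"
    by (rule uncountable_cofinalityE[OF cof]) blast
  have "(\<lambda>x. 0) \<in> uniform_nhd (\<lambda>x. 0) {M} 1"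
    using zero_in_CF by (simp add: uniform_nhd_def)
  then obtain b where b: "b \<in> B" "b \<in> uniform_nhd (\<lambda>x. 0) {M} 1"
    using B(3) openin_uniform_nhd[OF compact_sing zero_in_CF] unfolding in_closure_of by blast
  have "b M = indicator {steps b<..} M" using bspec[OF steps b(1)] by (rule fun_cong)
  also have "\<dots> = 1" using M b(1) by simp
  finally show False using b(2) unfolding uniform_nhd_def by simp
qed

lemma has_G_base_at_CO:
  fixes \<phi> :: "(nat \<Rightarrow> nat) \<Rightarrow> 'a::{wellorder,linorder_topology}"
  assumes mono: "mono \<phi>" and cofinal: "\<And>z. \<exists>\<alpha>. z < \<phi> \<alpha>"
  shows "has_G_base_at (CO :: ('a \<Rightarrow> real) topology) (\<lambda>x. 0)"
proof -
  define U where "U \<alpha> = uniform_nhd (\<lambda>x::'a. 0) {..\<phi> \<alpha>} (inverse (real (Suc (\<alpha> 0))))" for \<alpha>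
  have U_antimono: "U \<beta> \<subseteq> U \<alpha>" if "\<alpha> \<le> \<beta>" for \<alpha> \<beta>
  proof -
    have "\<phi> \<alpha> \<le> \<phi> \<beta>" using monoD[OF mono that] .
    moreover have "\<alpha> 0 \<le> \<beta> 0" using that unfolding le_fun_def by blast
    then have "inverse (real (Suc (\<beta> 0))) \<le> inverse (real (Suc (\<alpha> 0)))"
      by (intro le_imp_inverse_le) auto
    ultimately show ?thesis unfolding U_def by (intro uniform_nhd_antimono) auto
  qed
  have "nhd_in CO (\<lambda>x. 0) (U \<alpha>)" for \<alpha>
    unfolding U_def
  proof (rule openin_imp_nhd_in)
    show "openin CO (uniform_nhd (\<lambda>x. 0) {..\<phi> \<alpha>} (inverse (real (Suc (\<alpha> 0)))))"
      by (rule openin_uniform_nhd[OF compact_atMost_wellorder zero_in_CF])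
  qed (simp add: uniform_nhd_def zero_in_CF)
  moreover have "\<exists>\<alpha>. U \<alpha> \<subseteq> W" if W: "nhd_in CO (\<lambda>x. 0) W" for W
  proof -
    obtain V where V: "openin CO V" "(\<lambda>x. 0) \<in> V" "V \<subseteq> W"
      using W unfolding nhd_in_def by blast
    have no_max: "\<exists>w. z < w" for z :: 'a using cofinal[of z] by blast
    obtain m e where me: "e > 0" "uniform_nhd (\<lambda>x. 0) {..<m} e \<subseteq> V"
      using openin_CO_imp_uniform_nhd_initial_segment[OF no_max V(1,2)] by blast
    obtain \<alpha>0 where "m < \<phi> \<alpha>0" using cofinal by blast
    obtain N where N: "inverse (real (Suc N)) < e" using reals_Archimedean[OF me(1)] by blast
    define \<alpha> where "\<alpha> = \<alpha>0(0 := max (\<alpha>0 0) N)"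
    have "\<alpha>0 \<le> \<alpha>" unfolding \<alpha>_def le_fun_def by simp
    then have "m < \<phi> \<alpha>" using \<open>m < \<phi> \<alpha>0\<close> monoD[OF mono] by (blast intro: less_le_trans)
    then have "{..<m} \<subseteq> {..\<phi> \<alpha>}" by auto
    moreover have "inverse (real (Suc (\<alpha> 0))) \<le> inverse (real (Suc N))"
      unfolding \<alpha>_def by (intro le_imp_inverse_le) auto
    then have "inverse (real (Suc (\<alpha> 0))) \<le> e" using N by linarith
    ultimately have "U \<alpha> \<subseteq> uniform_nhd (\<lambda>x. 0) {..<m} e"
      unfolding U_def by (rule uniform_nhd_antimono)
    then show ?thesis using me V by blast
  qed
  ultimately show ?thesis
    using U_antimono unfolding has_G_base_at_def le_fun_def by blast
qed

text \<open>Beyond some \<open>M\<close>, \<open>f\<close> and all \<open>s j\<close> are constant, so the uniform distance is attained on the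
  compact set \<open>{..M}\<close>.\<close>

lemma limitin_CO_imp_uniform_limit:
  fixes s :: "nat \<Rightarrow> 'a::{wellorder,linorder_topology} \<Rightarrow> real"
  assumes cof: "uncountable_cofinality TYPE('a)"
    and s: "\<And>j. s j \<in> CF" and f: "f \<in> CF" and lim: "limitin CO s f sequentially"
  shows "uniform_limit UNIV s f sequentially"
proof (rule uniform_limitI)
  fix e :: real assume "e > 0"
  have "\<exists>\<xi>. \<forall>y\<ge>\<xi>. s j y = s j \<xi>" for j
    using continuous_eventually_constant[OF cof] s[of j] by (simp add: cfun_euclidean)
  from choice[OF allI[OF this]] obtain \<xi> where \<xi>: "\<forall>j. \<forall>y\<ge>\<xi> j. s j y = s j (\<xi> j)" ..
  have "continuous_on UNIV f" using f by (simp add: cfun_euclidean)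
  then obtain \<xi>f where \<xi>f: "\<forall>y\<ge>\<xi>f. f y = f \<xi>f"
    using continuous_eventually_constant[OF cof] by blast
  have "countable (insert \<xi>f (range \<xi>))" by simp
  then obtain M where M: "\<And>x. x \<in> insert \<xi>f (range \<xi>) \<Longrightarrow> x < M"
    by (rule uncountable_cofinalityE[OF cof]) blast
  have "f \<in> uniform_nhd f {..M} e" using f \<open>e > 0\<close> by (simp add: uniform_nhd_def)
  then have "\<forall>\<^sub>F j in sequentially. s j \<in> uniform_nhd f {..M} e"
    using lim openin_uniform_nhd[OF compact_atMost_wellorder f] unfolding limitin_def by blast
  then show "\<forall>\<^sub>F j in sequentially. \<forall>x\<in>UNIV. dist (s j x) (f x) < e"
  proof (rule eventually_mono)
    fix j assume j: "s j \<in> uniform_nhd f {..M} e"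
    have "\<bar>s j x - f x\<bar> < e" for x
    proof (cases "x \<le> M")
      case False
      then have "M \<le> x" by simp
      moreover have "\<xi> j \<le> M" "\<xi>f \<le> M" using M[of "\<xi> j"] M[of \<xi>f] by simp_all
      ultimately have "s j x = s j M" "f x = f M"
        using \<xi> \<xi>f by (metis order_trans order_refl)+
      then show ?thesis using j unfolding uniform_nhd_def by simp
    qed (use j in \<open>simp add: uniform_nhd_def\<close>)
    then show "\<forall>x\<in>UNIV. dist (s j x) (f x) < e" by (simp add: dist_real_def)
  qed
qed

lemma countable_cs_star_character_CO:
  assumes cof: "uncountable_cofinality TYPE('a::{wellorder,linorder_topology})"
  shows "countable_cs_star_character (CO :: ('a \<Rightarrow> real) topology)"
  unfolding countable_cs_star_character_def topspace_CO
proof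
  fix f :: "'a \<Rightarrow> real" assume f: "f \<in> CF"
  define ball_n where "ball_n n = uniform_nhd f UNIV (inverse (real (Suc n)))" for n
  have "cs_star_network_at CO f (range ball_n)"
    unfolding cs_star_network_at_def topspace_CO
  proof (intro allI impI)
    fix s W assume sW: "(\<forall>n. s n \<in> CF) \<and> limitin CO s f sequentially \<and> nhd_in CO f W"
    then have s: "\<And>j. s j \<in> CF" and lim: "limitin CO s f sequentially"
      and W: "nhd_in CO f W" by simp_all
    obtain V where V: "openin CO V" "f \<in> V" "V \<subseteq> W" using W unfolding nhd_in_def by blast
    obtain K e where Ke: "compact K" "e > 0" "uniform_nhd f K e \<subseteq> V"
      using openin_CO_imp_uniform_nhd[OF V(1,2)] by blast
    obtain n where n: "inverse (real (Suc n)) < e" using reals_Archimedean[OF Ke(2)] by blast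
    have "ball_n n \<subseteq> uniform_nhd f K e"
      unfolding ball_n_def using n by (intro uniform_nhd_antimono) auto
    then have "ball_n n \<subseteq> W" using Ke(3) V(3) by blast
    have "f \<in> ball_n n" unfolding ball_n_def uniform_nhd_def using f by simp
    have "uniform_limit UNIV s f sequentially"
      by (rule limitin_CO_imp_uniform_limit[OF cof s f lim])
    then have "\<forall>\<^sub>F j in sequentially. \<forall>x\<in>UNIV. dist (s j x) (f x) < inverse (real (Suc n))"
      by (rule uniform_limitD) simp
    then have "\<forall>\<^sub>F j in sequentially. s j \<in> ball_n n"
      by (rule eventually_mono) (simp add: ball_n_def uniform_nhd_def dist_real_def s)
    then obtain J where "\<forall>j\<ge>J. s j \<in> ball_n n" unfolding eventually_sequentially by blast
    then have "{J..} \<subseteq> {j. s j \<in> ball_n n}" by auto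
    then have "infinite {j. s j \<in> ball_n n}" by (rule infinite_super) (rule infinite_Ici)
    with \<open>ball_n n \<subseteq> W\<close> \<open>f \<in> ball_n n\<close>
    show "\<exists>N\<in>range ball_n. f \<in> N \<and> N \<subseteq> W \<and> infinite {j. s j \<in> N}" by blast
  qed
  then show "\<exists>\<N>. countable \<N> \<and> cs_star_network_at CO f \<N>"
    by (intro exI[of _ "range ball_n"]) simp
qed

theorem mainTheorem18:
  fixes A :: "(nat \<Rightarrow> nat) set"
  assumes bA: "b_witness A"
    and card_X: "(UNIV :: 'a :: {wellorder, linorder_topology} set) \<approx> A"
    and initial: "\<forall>x :: 'a. {..<x} \<prec> A"
  defines "CX \<equiv> compact_open (euclidean :: 'a topology)"
  shows "has_G_base_at CX (\<lambda>x. 0) \<and> countable_cs_star_character CX \<and>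
         \<not> countable_tightness CX \<and> \<not> countable_pseudocharacter CX \<and>
         \<not> submetrizable CX \<and> \<not> sigma_space CX"
proof -
  have cof: "uncountable_cofinality TYPE('a)"
    using b_ordinal_uncountable_cofinality[OF bA card_X initial] .
  obtain \<phi> :: "(nat \<Rightarrow> nat) \<Rightarrow> 'a" where "mono \<phi>" "\<And>z. \<exists>\<alpha>. z < \<phi> \<alpha>"
    using b_ordinal_monotone_cofinal_map[OF bA card_X initial] by blast
  then have "has_G_base_at CX (\<lambda>x. 0)" unfolding CX_def by (rule has_G_base_at_CO)
  moreover have "\<not> countable_pseudocharacter CX"
    unfolding CX_def using not_countable_pseudocharacter_CO[OF cof] .
  ultimately show ?thesis
    using countable_cs_star_character_CO[OF cof] not_countable_tightness_CO[OF cof]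
      submetrizable_imp_countable_pseudocharacter
      sigma_space_imp_countable_pseudocharacter[OF _ t1_space_CO]
    unfolding CX_def by blast
qed

end
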